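(* Every Ito-Sadahiro number $\beta\ge 2$ is a Perron number.
   Context: For $\beta>1$ put $l_\beta=-\frac{\beta}{\beta+1}$ and $I_\beta=[l_\beta,\frac{1}{\beta+1})$. Define $T:I_\beta\to I_\beta$ by $T(x)=-\beta x-\lfloor -\beta x-l_\beta\rfloor$. The $(-\beta)$-expansion of $x\in I_\beta$ is the infinite word $d_{-\beta}(x)=x_1x_2x_3\cdots$ with $x_i=\lfloor -\beta T^{i-1}(x)-l_\beta\rfloor$ for $i\ge1$. A number $\beta>1$ is an Ito-Sadahiro number if $d_{-\beta}(l_\beta)$ is eventually periodic. A Perron number is an algebraic integer $\beta>1$ all of whose other algebraic conjugates have modulus strictly smaller than $\beta$. *)

theory Defs
  imports "HOL-Computational_Algebra.Computational_Algebra"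
begin

definition l_beta :: "real \<Rightarrow> real" where
  "l_beta \<beta> = - \<beta> / (\<beta> + 1)"

definition negbeta_T :: "real \<Rightarrow> real \<Rightarrow> real" where
  "negbeta_T \<beta> x = - \<beta> * x - of_int \<lfloor>- \<beta> * x - l_beta \<beta>\<rfloor>"

text \<open>Digit sequence of the (-beta)-expansion, indexed from 0:
  negbeta_digits beta x i is the digit x_(i+1) of the paper.\<close>
definition negbeta_digits :: "real \<Rightarrow> real \<Rightarrow> nat \<Rightarrow> int" where
  "negbeta_digits \<beta> x i = \<lfloor>- \<beta> * ((negbeta_T \<beta> ^^ i) x) - l_beta \<beta>\<rfloor>"

definition eventually_periodic :: "(nat \<Rightarrow> 'a) \<Rightarrow> bool" where
  "eventually_periodic s \<longleftrightarrow> (\<exists>N p. p > 0 \<and> (\<forall>n\<ge>N. s (n + p) = s n))"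

definition Ito_Sadahiro :: "real \<Rightarrow> bool" where
  "Ito_Sadahiro \<beta> \<longleftrightarrow> \<beta> > 1 \<and> eventually_periodic (negbeta_digits \<beta> (l_beta \<beta>))"

definition alg_conjugate :: "real \<Rightarrow> complex \<Rightarrow> bool" where
  "alg_conjugate \<beta> z \<longleftrightarrow> (\<exists>p :: int poly. irreducible p \<and>
      poly (map_poly of_int p) \<beta> = 0 \<and> poly (map_poly of_int p) z = 0)"

definition Perron :: "real \<Rightarrow> bool" where
  "Perron \<beta> \<longleftrightarrow> algebraic_int \<beta> \<and> \<beta> > 1 \<and>
     (\<forall>z. alg_conjugate \<beta> z \<and> z \<noteq> complex_of_real \<beta> \<longrightarrow> cmod z < \<beta>)"

end

theory Submission
  imports Defs
begin

text \<open>
  Conjugating the \<open>(-\<beta>)\<close>-transformation \<open>T\<close> by the reflection \<open>x \<mapsto> l\<^sub>\<beta> + 1 - x\<close> turns it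
  into \<open>S x = 1 + \<lfloor>\<beta>x\<rfloor> - \<beta>x\<close> (\<open>flip_T\<close>) on \<open>(0, 1]\<close>, and the digits of the expansion of \<open>l\<^sub>\<beta>\<close>
  are \<open>\<lfloor>\<beta> S\<^sup>n(1)\<rfloor>\<close>. Since \<open>S\<close> expands distances by \<open>\<beta>\<close> as long as the digits agree, eventually
  periodic digits make the orbit of \<open>1\<close> eventually periodic; as \<open>S\<^sup>n(1)\<close> is an integer polynomial in
  \<open>\<beta>\<close> of degree \<open>n\<close> with leading coefficient \<open>\<plusminus>1\<close>, \<open>\<beta>\<close> is an algebraic integer.

  For a conjugate \<open>z\<close> let \<open>\<sigma>\<close> be the embedding \<open>\<int>[\<beta>] \<rightarrow> \<complex>\<close> with \<open>\<beta> \<mapsto> z\<close> and \<open>P\<close> the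
  finite set consisting of \<open>0\<close> and the orbit of \<open>1\<close>. With \<open>C b = \<lceil>\<beta>b\<rceil> - \<beta>b\<close> (\<open>ceil_gap\<close>), the identity
  \<open>\<beta>(b - a) = S a - C b + n\<close> with an integer \<open>n \<ge> 0\<close> transports to
  \<open>z(\<sigma> b - \<sigma> a) = \<sigma>(S a) - \<sigma>(C b) + n\<close>. Let \<open>c \<ge> 1\<close> be the Lipschitz constant (\<open>lip\<close>) of \<open>\<sigma>\<close> on
  \<open>P\<close>; estimating the identity at a pair where \<open>c\<close> is attained gives \<open>|z| \<le> \<beta>\<close>. If \<open>|z| = \<beta>\<close>,
  the estimate is sharp at every such pair: for \<open>c = 1\<close> this forces \<open>z = \<beta>\<close>, and for \<open>c > 1\<close>
  it produces another such pair of length at least \<open>\<beta>(b - a)/2 > b - a\<close> (this is where \<open>\<beta> > 2\<close>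
  is needed), which is impossible in the finite set \<open>P\<close>. The case \<open>\<beta> = 2\<close> is trivial.
\<close>

section \<open>The reflected \<open>(-\<beta>)\<close>-transformation\<close>

definition flip_T :: "real \<Rightarrow> real \<Rightarrow> real" where
  "flip_T \<beta> x = 1 + of_int \<lfloor>\<beta> * x\<rfloor> - \<beta> * x"

definition ceil_gap :: "real \<Rightarrow> real \<Rightarrow> real" where
  "ceil_gap \<beta> x = of_int \<lceil>\<beta> * x\<rceil> - \<beta> * x"

lemma flip_T_bounds: "0 < flip_T \<beta> x" "flip_T \<beta> x \<le> 1"
  unfolding flip_T_def by linarith+

lemma ceil_gap_bounds: "0 \<le> ceil_gap \<beta> x" "ceil_gap \<beta> x < 1"
  unfolding ceil_gap_def by linarith+

lemma ceil_gap_cases: "ceil_gap \<beta> x = 0 \<or> ceil_gap \<beta> x = flip_T \<beta> x"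
proof (cases "\<beta> * x \<in> \<int>")
  case True
  then show ?thesis unfolding ceil_gap_def by (auto elim: Ints_cases)
next
  case False
  then have "\<beta> * x \<noteq> of_int \<lfloor>\<beta> * x\<rfloor>" by (metis Ints_of_int)
  then have "\<lceil>\<beta> * x\<rceil> = \<lfloor>\<beta> * x\<rfloor> + 1" by (simp add: ceiling_altdef)
  then show ?thesis unfolding ceil_gap_def flip_T_def by simp
qed

lemma mult_diff_eq_flip_T_ceil_gap:
  "\<beta> * (b - a) = flip_T \<beta> a - ceil_gap \<beta> b + of_int (\<lceil>\<beta> * b\<rceil> - \<lfloor>\<beta> * a\<rfloor> - 1)"
  unfolding flip_T_def ceil_gap_def by (simp add: algebra_simps)

lemma flip_T_iterate_diff:
  "(flip_T \<beta> ^^ k) x - (flip_T \<beta> ^^ k) y = (- \<beta>) ^ k * (x - y)"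
  if "\<forall>i<k. \<lfloor>\<beta> * (flip_T \<beta> ^^ i) x\<rfloor> = \<lfloor>\<beta> * (flip_T \<beta> ^^ i) y\<rfloor>"
  using that
proof (induction k)
  case (Suc k)
  then have "\<lfloor>\<beta> * (flip_T \<beta> ^^ k) x\<rfloor> = \<lfloor>\<beta> * (flip_T \<beta> ^^ k) y\<rfloor>" by simp
  then have "(flip_T \<beta> ^^ Suc k) x - (flip_T \<beta> ^^ Suc k) y
      = - \<beta> * ((flip_T \<beta> ^^ k) x - (flip_T \<beta> ^^ k) y)"
    by (simp add: flip_T_def[of \<beta> "(flip_T \<beta> ^^ k) x"] flip_T_def[of \<beta> "(flip_T \<beta> ^^ k) y"]
        algebra_simps)
  with Suc show ?case by simp
qed simp

lemma flip_T_orbit_eqI: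
  assumes "\<beta> > 1" "0 < x" "x \<le> 1" "0 < y" "y \<le> 1"
    and "\<forall>k. \<lfloor>\<beta> * (flip_T \<beta> ^^ k) x\<rfloor> = \<lfloor>\<beta> * (flip_T \<beta> ^^ k) y\<rfloor>"
  shows "x = y"
proof (rule ccontr)
  assume "x \<noteq> y"
  then obtain k where "1 / \<bar>x - y\<bar> < \<beta> ^ k" using real_arch_pow[OF assms(1)] by blast
  with \<open>x \<noteq> y\<close> have "1 < \<beta> ^ k * \<bar>x - y\<bar>" by (simp add: divide_less_eq)
  also have "\<dots> = \<bar>(flip_T \<beta> ^^ k) x - (flip_T \<beta> ^^ k) y\<bar>"
    using flip_T_iterate_diff[of k \<beta> x y] assms by (simp add: abs_mult power_abs)
  also have "\<dots> < 1"
  proof (cases k)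
    case (Suc i)
    then show ?thesis
      using flip_T_bounds[of \<beta> "(flip_T \<beta> ^^ i) x"] flip_T_bounds[of \<beta> "(flip_T \<beta> ^^ i) y"]
      by (simp add: abs_less_iff)
  qed (use assms in auto)
  finally have "1 < (1::real)" .
  then show False by simp
qed

lemma add_one_mult_l_beta:
  assumes "\<beta> > 1"
  shows "(\<beta> + 1) * l_beta \<beta> = - \<beta>"
  using assms unfolding l_beta_def by (simp add: field_simps)

lemma negbeta_T_reflect:
  assumes "\<beta> > 1"
  shows "negbeta_T \<beta> (l_beta \<beta> + 1 - x) = l_beta \<beta> + 1 - flip_T \<beta> x"
proof -
  have "- \<beta> * (l_beta \<beta> + 1 - x) = \<beta> * x + l_beta \<beta>"
    using add_one_mult_l_beta[OF assms] by (simp add: algebra_simps)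
  then show ?thesis unfolding negbeta_T_def flip_T_def by simp
qed

definition flip_orbit :: "real \<Rightarrow> nat \<Rightarrow> real" where
  "flip_orbit \<beta> n = (flip_T \<beta> ^^ n) 1"

lemma flip_orbit_0 [simp]: "flip_orbit \<beta> 0 = 1"
  and flip_orbit_Suc: "flip_orbit \<beta> (Suc n) = flip_T \<beta> (flip_orbit \<beta> n)"
  and flip_orbit_add: "(flip_T \<beta> ^^ k) (flip_orbit \<beta> n) = flip_orbit \<beta> (n + k)"
  unfolding flip_orbit_def by (simp_all add: funpow_add add.commute)

lemma flip_orbit_bounds: "0 < flip_orbit \<beta> n" "flip_orbit \<beta> n \<le> 1"
  by (cases n; simp add: flip_orbit_Suc flip_T_bounds)+

lemma negbeta_digits_l_beta:
  assumes "\<beta> > 1"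
  shows "negbeta_digits \<beta> (l_beta \<beta>) n = \<lfloor>\<beta> * flip_orbit \<beta> n\<rfloor>"
proof -
  have iterate: "(negbeta_T \<beta> ^^ n) (l_beta \<beta>) = l_beta \<beta> + 1 - flip_orbit \<beta> n"
    by (induction n) (simp_all add: negbeta_T_reflect[OF assms] flip_orbit_Suc)
  have "- \<beta> * (l_beta \<beta> + 1 - flip_orbit \<beta> n) - l_beta \<beta> = \<beta> * flip_orbit \<beta> n"
    using add_one_mult_l_beta[OF assms] by (simp add: algebra_simps)
  then show ?thesis unfolding negbeta_digits_def iterate by simp
qed

lemma Ito_Sadahiro_flip_orbit_periodic:
  assumes "Ito_Sadahiro \<beta>"
  shows "eventually_periodic (flip_orbit \<beta>)"
proof -
  have \<beta>: "\<beta> > 1" using assms unfolding Ito_Sadahiro_def by simp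
  obtain N p where "p > 0" and per: "\<forall>n\<ge>N. \<lfloor>\<beta> * flip_orbit \<beta> (n + p)\<rfloor> = \<lfloor>\<beta> * flip_orbit \<beta> n\<rfloor>"
    using assms unfolding Ito_Sadahiro_def eventually_periodic_def negbeta_digits_l_beta[OF \<beta>]
    by blast
  have "flip_orbit \<beta> (n + p) = flip_orbit \<beta> n" if "n \<ge> N" for n
  proof (rule flip_T_orbit_eqI[OF \<beta> flip_orbit_bounds flip_orbit_bounds], intro allI)
    fix k
    show "\<lfloor>\<beta> * (flip_T \<beta> ^^ k) (flip_orbit \<beta> (n + p))\<rfloor> = \<lfloor>\<beta> * (flip_T \<beta> ^^ k) (flip_orbit \<beta> n)\<rfloor>"
      using per[rule_format, of "n + k"] that by (simp add: flip_orbit_add ac_simps)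
  qed
  with \<open>p > 0\<close> show ?thesis unfolding eventually_periodic_def by blast
qed

lemma eventually_periodic_finite_range:
  assumes "eventually_periodic s"
  shows "finite (range s)"
proof -
  obtain N p where "p > 0" and per: "\<forall>n\<ge>N. s (n + p) = s n"
    using assms unfolding eventually_periodic_def by blast
  have "s n \<in> s ` {..<N + p}" for n
  proof (induction n rule: less_induct)
    case (less n)
    show ?case
    proof (cases "n < N + p")
      case False
      then have "s n = s (n - p)" using per[rule_format, of "n - p"] by simp
      with less \<open>p > 0\<close> False show ?thesis by simp
    qed simp
  qed
  then have "range s \<subseteq> s ` {..<N + p}" by blast
  then show ?thesis using finite_subset by blast
qed

section \<open>\<open>\<beta>\<close> is an algebraic integer\<close>

abbreviation ipoly :: "int poly \<Rightarrow> 'a::comm_ring_1 \<Rightarrow> 'a" where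
  "ipoly p \<equiv> poly (map_poly of_int p)"

lemma map_poly_of_int_add [simp]: "map_poly of_int (p + q) = map_poly of_int p + map_poly of_int q"
  and map_poly_of_int_diff [simp]: "map_poly of_int (p - q) = map_poly of_int p - map_poly of_int q"
  and map_poly_of_int_uminus [simp]: "map_poly of_int (- p) = - map_poly of_int p"
  and map_poly_of_int_mult [simp]: "map_poly of_int (p * q) = map_poly of_int p * map_poly of_int q"
  and map_poly_of_int_smult [simp]: "map_poly of_int (smult a p) = smult (of_int a) (map_poly of_int p)"
  by (rule poly_eqI; simp add: coeff_map_poly coeff_mult)+

fun orbit_poly :: "real \<Rightarrow> nat \<Rightarrow> int poly" where
  "orbit_poly \<beta> 0 = 1"
| "orbit_poly \<beta> (Suc n) = [:1 + \<lfloor>\<beta> * flip_orbit \<beta> n\<rfloor>:] - pCons 0 (orbit_poly \<beta> n)"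

lemma ipoly_orbit_poly: "ipoly (orbit_poly \<beta> n) \<beta> = flip_orbit \<beta> n"
  by (induction n) (simp_all add: flip_orbit_Suc flip_T_def map_poly_pCons)

lemma degree_orbit_poly: "degree (orbit_poly \<beta> n) = n"
  and lead_coeff_orbit_poly: "lead_coeff (orbit_poly \<beta> n) = (- 1) ^ n"
proof (induction n)
  case (Suc n)
  then have "degree (pCons 0 (orbit_poly \<beta> n)) = Suc n" by (auto simp: degree_pCons_eq)
  moreover have "degree [:1 + \<lfloor>\<beta> * flip_orbit \<beta> n\<rfloor>:] < Suc n" by simp
  ultimately have "degree (orbit_poly \<beta> (Suc n)) = Suc n"
    by (simp only: orbit_poly.simps diff_conv_add_uminus degree_add_eq_right degree_minus)
  with Suc show "degree (orbit_poly \<beta> (Suc n)) = Suc n"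
    and "lead_coeff (orbit_poly \<beta> (Suc n)) = (- 1) ^ Suc n" by simp_all
qed simp_all

lemma algebraic_int_if_flip_orbit_periodic:
  assumes "eventually_periodic (flip_orbit \<beta>)"
  shows "algebraic_int \<beta>"
proof -
  obtain N p where "p > 0" and per: "flip_orbit \<beta> (N + p) = flip_orbit \<beta> N"
    using assms unfolding eventually_periodic_def by blast
  define Q where "Q = smult ((- 1) ^ (N + p)) (orbit_poly \<beta> (N + p) - orbit_poly \<beta> N)"
  have "degree (orbit_poly \<beta> N) < degree (orbit_poly \<beta> (N + p))"
    using \<open>p > 0\<close> by (simp add: degree_orbit_poly)
  then have "lead_coeff (orbit_poly \<beta> (N + p) - orbit_poly \<beta> N) = (- 1) ^ (N + p)"
    by (simp add: coeff_eq_0 lead_coeff_orbit_poly[unfolded degree_orbit_poly] degree_orbit_poly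
        degree_add_eq_left[of "- _", folded diff_conv_add_uminus])
  then have "lead_coeff Q = 1"
    unfolding Q_def by (simp add: power_mult_distrib[symmetric])
  moreover have "ipoly Q \<beta> = 0"
    unfolding Q_def by (simp add: ipoly_orbit_poly per)
  ultimately show ?thesis unfolding algebraic_int_altdef_ipoly by blast
qed

section \<open>Evaluating integer polynomials at a conjugate\<close>

lemma prime_int_poly_degree_le:
  fixes x :: "'a::{idom, ring_char_0}"
  assumes p: "prime_elem p" "ipoly p x = 0"
  shows "r \<noteq> 0 \<Longrightarrow> ipoly r x = 0 \<Longrightarrow> degree p \<le> degree r"
proof (induction "degree r" arbitrary: r rule: less_induct)
  case less
  show ?case
  proof (rule ccontr)
    assume deg: "\<not> degree p \<le> degree r"
    obtain a q where "a \<noteq> 0" and div: "smult a p = r * q + pseudo_mod p r"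
      using pseudo_mod(1)[OF \<open>r \<noteq> 0\<close>] by blast
    have "ipoly (pseudo_mod p r) x = 0"
      using arg_cong[OF div, of "\<lambda>s. ipoly s x"] p(2) less.prems(2) by simp
    then have "pseudo_mod p r = 0"
      using less.hyps deg pseudo_mod(2)[OF \<open>r \<noteq> 0\<close>] by fastforce
    with div have "p dvd r * q" by (metis add_0_right dvd_smult dvd_refl)
    then consider "p dvd r" | "p dvd q" using p(1) prime_elem_dvd_mult_iff by blast
    then show False
    proof cases
      case 1
      then show False using deg \<open>r \<noteq> 0\<close> dvd_imp_degree_le by blast
    next
      case 2
      then obtain w where "q = p * w" by blast
      with div \<open>pseudo_mod p r = 0\<close> have "p * [:a:] = p * (r * w)" by (simp add: ac_simps)
      moreover have "p \<noteq> 0" using p(1) by auto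
      ultimately have "[:a:] = r * w" using mult_left_cancel by blast
      with \<open>a \<noteq> 0\<close> have "w \<noteq> 0" by auto
      have "degree (r * w) = 0" by (simp flip: \<open>[:a:] = r * w\<close>)
      then have "degree r = 0" using degree_mult_eq[OF \<open>r \<noteq> 0\<close> \<open>w \<noteq> 0\<close>] by simp
      then obtain c where "r = [:c:]" by (rule degree_eq_zeroE)
      with less.prems show False by (simp add: map_poly_pCons)
    qed
  qed
qed

lemma irreducible_int_poly_common_root:
  fixes x :: "'a::{idom, ring_char_0}" and y :: "'b::{idom, ring_char_0}"
  assumes "irreducible p" "ipoly p x = 0" "ipoly p y = 0" "ipoly q x = 0"
  shows "ipoly q y = 0"
proof -
  have p: "prime_elem p" using assms(1) by (rule irreducible_imp_prime_poly)
  then have "p \<noteq> 0" by auto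
  obtain a s where "a \<noteq> 0" and div: "smult a q = p * s + pseudo_mod q p"
    using pseudo_mod(1)[OF \<open>p \<noteq> 0\<close>] by blast
  have "ipoly (pseudo_mod q p) x = 0"
    using arg_cong[OF div, of "\<lambda>s. ipoly s x"] assms(2,4) by simp
  then have "pseudo_mod q p = 0"
    using prime_int_poly_degree_le[OF p assms(2)] pseudo_mod(2)[OF \<open>p \<noteq> 0\<close>] by fastforce
  then have "of_int a * ipoly q y = 0"
    using arg_cong[OF div, of "\<lambda>s. ipoly s y"] assms(3) by simp
  with \<open>a \<noteq> 0\<close> show ?thesis by simp
qed

lemma alg_conjugate_ipoly_eq_0:
  assumes "alg_conjugate \<beta> z" "ipoly q \<beta> = 0"
  shows "ipoly q z = 0"
  using assms irreducible_int_poly_common_root unfolding alg_conjugate_def by blast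

lemma alg_conjugate_of_int:
  assumes "alg_conjugate (of_int k) z"
  shows "z = of_int k"
  using alg_conjugate_ipoly_eq_0[OF assms, of "[:- k, 1:]"] by (simp add: map_poly_pCons)

text \<open>\<open>SOME\<close> picks an arbitrary integer polynomial representing \<open>x\<close>; by \<open>conj_map_ipoly\<close> the choice
  does not matter on \<open>\<int>[\<beta>]\<close>, while outside \<open>\<int>[\<beta>]\<close> the value is junk.\<close>

definition conj_map :: "real \<Rightarrow> complex \<Rightarrow> real \<Rightarrow> complex" where
  "conj_map \<beta> z x = ipoly (SOME q. ipoly q \<beta> = x) z"

lemma conj_map_ipoly:
  assumes "alg_conjugate \<beta> z"
  shows "conj_map \<beta> z (ipoly q \<beta>) = ipoly q z"
proof -
  define q' where "q' = (SOME q'. ipoly q' \<beta> = ipoly q \<beta>)"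
  have "ipoly q' \<beta> = ipoly q \<beta>" unfolding q'_def by (rule someI) (rule refl)
  then have "ipoly (q' - q) z = 0"
    using alg_conjugate_ipoly_eq_0[OF assms, of "q' - q"] by simp
  then show ?thesis unfolding conj_map_def q'_def[symmetric] by simp
qed

lemma conj_map_flip_T:
  assumes "alg_conjugate \<beta> z" "x = ipoly q \<beta>"
  shows "conj_map \<beta> z (flip_T \<beta> x) = 1 + of_int \<lfloor>\<beta> * x\<rfloor> - z * conj_map \<beta> z x"
  using conj_map_ipoly[OF assms(1), of "[:1 + \<lfloor>\<beta> * x\<rfloor>:] - pCons 0 q"]
  by (simp add: assms flip_T_def map_poly_pCons conj_map_ipoly)

lemma conj_map_ceil_gap:
  assumes "alg_conjugate \<beta> z" "x = ipoly q \<beta>"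
  shows "conj_map \<beta> z (ceil_gap \<beta> x) = of_int \<lceil>\<beta> * x\<rceil> - z * conj_map \<beta> z x"
  using conj_map_ipoly[OF assms(1), of "[:\<lceil>\<beta> * x\<rceil>:] - pCons 0 q"]
  by (simp add: assms ceil_gap_def map_poly_pCons conj_map_ipoly)

section \<open>The estimate for conjugates\<close>

lemma cmod_add_of_real_eq:
  assumes "K > 0" and "cmod (w + of_real K) = cmod w + K"
  shows "w = of_real (cmod w)"
proof -
  have "(Re w + K)\<^sup>2 + (Im w)\<^sup>2 = (cmod w + K)\<^sup>2"
    using arg_cong[OF assms(2), of "\<lambda>t. t\<^sup>2"] by (simp add: cmod_power2)
  then have "Re w = cmod w"
    using assms(1) by (simp add: power2_sum cmod_power2)
  moreover have "(Im w)\<^sup>2 = 0"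
    using cmod_power2[of w] \<open>Re w = cmod w\<close> by simp
  ultimately show ?thesis by (simp add: complex_eq_iff)
qed

lemma floor_less_ceiling_mult:
  fixes \<beta> :: real
  assumes "\<beta> > 0" "a < b"
  shows "\<lfloor>\<beta> * a\<rfloor> < \<lceil>\<beta> * b\<rceil>"
proof -
  have "\<beta> * a < \<beta> * b" using assms by simp
  then show ?thesis by linarith
qed

locale flip_conjugation =
  fixes \<beta> :: real and z :: complex and P :: "real set" and \<sigma> :: "real \<Rightarrow> complex"
  assumes beta_gt_2: "\<beta> > 2"
    and finite_P: "finite P" and zero_in_P: "0 \<in> P" and one_in_P: "1 \<in> P"
    and flip_T_in_P: "x \<in> P \<Longrightarrow> flip_T \<beta> x \<in> P"
    and ceil_gap_in_P: "x \<in> P \<Longrightarrow> ceil_gap \<beta> x \<in> P"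
    and sigma_0: "\<sigma> 0 = 0" and sigma_1: "\<sigma> 1 = 1"
    and sigma_flip_T: "x \<in> P \<Longrightarrow> \<sigma> (flip_T \<beta> x) = 1 + of_int \<lfloor>\<beta> * x\<rfloor> - z * \<sigma> x"
    and sigma_ceil_gap: "x \<in> P \<Longrightarrow> \<sigma> (ceil_gap \<beta> x) = of_int \<lceil>\<beta> * x\<rceil> - z * \<sigma> x"
begin

lemma z_mult_sigma_diff:
  assumes "a \<in> P" "b \<in> P"
  shows "z * (\<sigma> b - \<sigma> a)
    = \<sigma> (flip_T \<beta> a) - \<sigma> (ceil_gap \<beta> b) + of_int (\<lceil>\<beta> * b\<rceil> - \<lfloor>\<beta> * a\<rfloor> - 1)"
  using assms by (simp add: sigma_flip_T sigma_ceil_gap algebra_simps)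

lemma z_mult_sigma_diff_cases:
  assumes "a \<in> P" "b \<in> P" "a < b"
  obtains "ceil_gap \<beta> b < flip_T \<beta> a" "\<beta> * (b - a) = flip_T \<beta> a - ceil_gap \<beta> b"
    "z * (\<sigma> b - \<sigma> a) = \<sigma> (flip_T \<beta> a) - \<sigma> (ceil_gap \<beta> b)"
  | m :: int where "m \<ge> 0" "\<beta> * (b - a) = flip_T \<beta> a + (1 - ceil_gap \<beta> b) + m"
    "z * (\<sigma> b - \<sigma> a) = (\<sigma> (flip_T \<beta> a) - \<sigma> 0) + (\<sigma> 1 - \<sigma> (ceil_gap \<beta> b)) + of_int m"
proof -
  define n where "n = \<lceil>\<beta> * b\<rceil> - \<lfloor>\<beta> * a\<rfloor> - 1"
  have len: "\<beta> * (b - a) = flip_T \<beta> a - ceil_gap \<beta> b + n"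
    unfolding n_def by (rule mult_diff_eq_flip_T_ceil_gap)
  have z: "z * (\<sigma> b - \<sigma> a) = \<sigma> (flip_T \<beta> a) - \<sigma> (ceil_gap \<beta> b) + of_int n"
    unfolding n_def by (rule z_mult_sigma_diff[OF assms(1,2)])
  have "n \<ge> 0" unfolding n_def using floor_less_ceiling_mult[of \<beta> a b] beta_gt_2 assms(3) by simp
  then consider "n = 0" | "n \<ge> 1" by linarith
  then show thesis
  proof cases
    case 1
    moreover have "\<beta> * (b - a) > 0" using beta_gt_2 assms(3) by simp
    ultimately show thesis using that(1) len z by simp
  next
    case 2
    then show thesis using that(2)[of "n - 1"] len z by (simp add: sigma_0 sigma_1 algebra_simps)
  qed
qed

definition lip :: real where
  "lip = Max {cmod (\<sigma> y - \<sigma> x) / (y - x) |x y. x \<in> P \<and> y \<in> P \<and> x < y}"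

lemma finite_ratios: "finite {cmod (\<sigma> y - \<sigma> x) / (y - x) |x y. x \<in> P \<and> y \<in> P \<and> x < y}"
proof -
  have "{cmod (\<sigma> y - \<sigma> x) / (y - x) |x y. x \<in> P \<and> y \<in> P \<and> x < y}
      \<subseteq> (\<lambda>(x, y). cmod (\<sigma> y - \<sigma> x) / (y - x)) ` (P \<times> P)" by auto
  then show ?thesis using finite_P finite_subset by blast
qed

lemma lip_bound:
  assumes "x \<in> P" "y \<in> P" "x < y"
  shows "cmod (\<sigma> y - \<sigma> x) \<le> lip * (y - x)"
proof -
  have "cmod (\<sigma> y - \<sigma> x) / (y - x) \<le> lip"
    unfolding lip_def using assms by (intro Max_ge[OF finite_ratios]) blast
  with assms(3) show ?thesis by (simp add: divide_le_eq)
qed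

lemma lip_ge_1: "lip \<ge> 1"
  using lip_bound[OF zero_in_P one_in_P] by (simp add: sigma_0 sigma_1)

definition tight :: "real \<Rightarrow> real \<Rightarrow> bool" where
  "tight a b \<longleftrightarrow> a \<in> P \<and> b \<in> P \<and> a < b \<and> cmod (\<sigma> b - \<sigma> a) = lip * (b - a)"

lemma tight_exists: "\<exists>a b. tight a b"
proof -
  have "lip \<in> {cmod (\<sigma> y - \<sigma> x) / (y - x) |x y. x \<in> P \<and> y \<in> P \<and> x < y}"
    unfolding lip_def using zero_in_P one_in_P zero_less_one by (intro Max_in[OF finite_ratios]) blast
  then obtain x y where "x \<in> P" "y \<in> P" "x < y" "lip = cmod (\<sigma> y - \<sigma> x) / (y - x)"
    by blast
  then have "tight x y" unfolding tight_def by simp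
  then show ?thesis by blast
qed

lemma norm_z_mult_le:
  assumes "a \<in> P" "b \<in> P" "a < b"
  shows "cmod z * cmod (\<sigma> b - \<sigma> a) \<le> lip * (\<beta> * (b - a))"
proof -
  let ?A = "flip_T \<beta> a" and ?B = "ceil_gap \<beta> b"
  have AB: "?A \<in> P" "?B \<in> P" "0 < ?A" "?B < 1"
    using assms flip_T_in_P ceil_gap_in_P flip_T_bounds ceil_gap_bounds by auto
  have "cmod (z * (\<sigma> b - \<sigma> a)) \<le> lip * (\<beta> * (b - a))"
  proof (cases rule: z_mult_sigma_diff_cases[OF assms])
    case 1
    then show ?thesis using lip_bound[OF AB(2,1)] by simp
  next
    case (2 m)
    let ?u = "\<sigma> ?A - \<sigma> 0" and ?v = "\<sigma> 1 - \<sigma> ?B"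
    have "cmod (of_int m :: complex) = m" by (subst norm_of_int) (use 2 in simp)
    then have "cmod (z * (\<sigma> b - \<sigma> a)) \<le> cmod ?u + cmod ?v + m"
      unfolding 2 using norm_triangle_ineq[of "?u + ?v" "of_int m"] norm_triangle_ineq[of ?u ?v]
      by linarith
    also have "\<dots> \<le> lip * ?A + lip * (1 - ?B) + lip * m"
      using lip_bound[OF zero_in_P AB(1)] lip_bound[OF AB(2) one_in_P]
        mult_right_mono[OF lip_ge_1, of m] 2 AB by simp
    also have "\<dots> = lip * (\<beta> * (b - a))" unfolding 2 by (simp add: algebra_simps)
    finally show ?thesis .
  qed
  then show ?thesis by (simp add: norm_mult)
qed

lemma norm_z_le: "cmod z \<le> \<beta>"
proof -
  obtain a b where "a \<in> P" "b \<in> P" "a < b" and tight: "cmod (\<sigma> b - \<sigma> a) = lip * (b - a)"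
    using tight_exists unfolding tight_def by blast
  then have "cmod z * (lip * (b - a)) \<le> lip * (\<beta> * (b - a))"
    using norm_z_mult_le by (simp flip: tight)
  moreover have "lip * (b - a) > 0" using lip_ge_1 \<open>a < b\<close> by simp
  ultimately show ?thesis by (simp add: mult.left_commute mult_right_le_imp_le)
qed

lemma tight_longer:
  assumes "cmod z = \<beta>" "lip > 1" "tight a b"
  shows "\<exists>a' b'. tight a' b' \<and> b - a < b' - a'"
proof -
  have ab: "a \<in> P" "b \<in> P" "a < b" using assms(3) unfolding tight_def by auto
  let ?A = "flip_T \<beta> a" and ?B = "ceil_gap \<beta> b"
  have AB: "?A \<in> P" "?B \<in> P" "0 < ?A" "?B < 1"
    using ab flip_T_in_P ceil_gap_in_P flip_T_bounds ceil_gap_bounds by auto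
  have long: "2 * (b - a) < \<beta> * (b - a)" using beta_gt_2 ab by (intro mult_strict_right_mono) auto
  have norm_eq: "cmod (z * (\<sigma> b - \<sigma> a)) = lip * (\<beta> * (b - a))"
    using assms(1,3) unfolding tight_def by (simp add: norm_mult)
  show ?thesis
  proof (cases rule: z_mult_sigma_diff_cases[OF ab])
    case 1
    then have "tight ?B ?A" using norm_eq AB unfolding tight_def by simp
    moreover have "b - a < ?A - ?B" using 1 long ab by simp
    ultimately show ?thesis by blast
  next
    case (2 m)
    let ?u = "\<sigma> ?A - \<sigma> 0" and ?v = "\<sigma> 1 - \<sigma> ?B"
    have u: "cmod ?u \<le> lip * ?A" and v: "cmod ?v \<le> lip * (1 - ?B)"
      using lip_bound[OF zero_in_P AB(1)] lip_bound[OF AB(2) one_in_P] AB by simp_all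
    have "cmod (of_int m :: complex) = m" by (subst norm_of_int) (use 2 in simp)
    then have sum: "lip * (?A + (1 - ?B) + m) \<le> cmod ?u + cmod ?v + m"
      using norm_eq norm_triangle_ineq[of "?u + ?v" "of_int m"] norm_triangle_ineq[of ?u ?v]
      unfolding 2 by linarith
    then have "(lip - 1) * m \<le> 0" using u v by (simp add: algebra_simps)
    then have "m = 0" using assms(2) 2 by (simp add: mult_le_0_iff)
    then have "cmod ?u = lip * (?A - 0)" "cmod ?v = lip * (1 - ?B)"
      using u v sum by (simp_all add: algebra_simps)
    then have "tight 0 ?A" "tight ?B 1"
      using AB zero_in_P one_in_P unfolding tight_def by simp_all
    moreover have "b - a < ?A - 0 \<or> b - a < 1 - ?B" using 2 long \<open>m = 0\<close> by (simp, linarith)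
    ultimately show ?thesis by blast
  qed
qed

lemma z_eq_beta_if_lip_eq_1:
  assumes "cmod z = \<beta>" "lip = 1"
  shows "z = \<beta>"
proof -
  define B K where "B = ceil_gap \<beta> 1" and "K = (of_int \<lceil>\<beta>\<rceil> - 1 :: real)"
  have z: "z = (1 - \<sigma> B) + of_real K"
    using z_mult_sigma_diff[OF zero_in_P one_in_P]
    unfolding B_def K_def by (simp add: sigma_0 sigma_1 flip_T_def)
  have bound: "cmod (1 - \<sigma> B) \<le> \<beta> - K"
    using lip_bound[OF ceil_gap_in_P[OF one_in_P] one_in_P] ceil_gap_bounds[of \<beta> 1] assms(2)
    unfolding B_def K_def ceil_gap_def by (simp add: sigma_1)
  have "K > 0" unfolding K_def using beta_gt_2 by linarith
  moreover have "cmod ((1 - \<sigma> B) + of_real K) = cmod (1 - \<sigma> B) + K"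
    using z assms(1) bound norm_triangle_ineq[of "1 - \<sigma> B" "of_real K"] \<open>K > 0\<close> by simp
  ultimately have "1 - \<sigma> B = of_real (cmod (1 - \<sigma> B))" by (rule cmod_add_of_real_eq)
  with z have z_real: "z = of_real (cmod (1 - \<sigma> B) + K)" by simp
  moreover have "cmod (1 - \<sigma> B) + K \<ge> 0" using \<open>K > 0\<close> by simp
  ultimately have "cmod (1 - \<sigma> B) + K = \<beta>" using assms(1) by (simp only: norm_of_real abs_of_nonneg)
  with z_real show ?thesis by simp
qed

theorem norm_less_or_eq: "cmod z < \<beta> \<or> z = \<beta>"
proof (rule ccontr)
  assume contra: "\<not> (cmod z < \<beta> \<or> z = \<beta>)"
  then have z: "cmod z = \<beta>" using norm_z_le by simp
  with contra have "lip > 1" using lip_ge_1 z_eq_beta_if_lip_eq_1 by force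
  define D where "D = {b - a |a b. tight a b}"
  have "finite D"
  proof -
    have "D \<subseteq> (\<lambda>(a, b). b - a) ` (P \<times> P)" unfolding D_def tight_def by auto
    then show ?thesis using finite_P finite_subset by blast
  qed
  have "Max D \<in> D" using tight_exists \<open>finite D\<close> unfolding D_def by (intro Max_in) auto
  then obtain a b where "tight a b" "b - a = Max D" unfolding D_def by force
  then obtain a' b' where "tight a' b'" "Max D < b' - a'" using tight_longer[OF z \<open>lip > 1\<close>] by metis
  moreover have "b' - a' \<le> Max D" using \<open>finite D\<close> \<open>tight a' b'\<close> unfolding D_def by (intro Max_ge) auto
  ultimately show False by simp
qed

end

lemma Ito_Sadahiro_conjugate_bound:
  assumes "Ito_Sadahiro \<beta>" "\<beta> > 2" "alg_conjugate \<beta> z"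
  shows "cmod z < \<beta> \<or> z = \<beta>"
proof -
  define P where "P = insert 0 (range (flip_orbit \<beta>))"
  have P_ipoly: "\<exists>q. x = ipoly q \<beta>" if "x \<in> P" for x
    using that ipoly_orbit_poly[of \<beta>, symmetric] unfolding P_def by (auto intro: exI[of _ 0])
  have flip_T_in_P: "flip_T \<beta> x \<in> P" if "x \<in> P" for x
  proof -
    have "flip_T \<beta> 0 \<in> range (flip_orbit \<beta>)"
      using rangeI[of "flip_orbit \<beta>" 0] by (simp add: flip_T_def)
    moreover have "flip_T \<beta> (flip_orbit \<beta> n) \<in> range (flip_orbit \<beta>)" for n
      by (simp flip: flip_orbit_Suc)
    ultimately show ?thesis using that unfolding P_def by blast
  qed
  interpret flip_conjugation \<beta> z P "conj_map \<beta> z"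
  proof
    show "\<beta> > 2" "0 \<in> P" "1 \<in> P"
      using assms(2) rangeI[of "flip_orbit \<beta>" 0] unfolding P_def by simp_all
    show "flip_T \<beta> x \<in> P" if "x \<in> P" for x
      using that by (rule flip_T_in_P)
    show "finite P"
      unfolding P_def
      using eventually_periodic_finite_range[OF Ito_Sadahiro_flip_orbit_periodic[OF assms(1)]] by simp
    show "ceil_gap \<beta> x \<in> P" if "x \<in> P" for x
      using ceil_gap_cases[of \<beta> x] flip_T_in_P[OF that] unfolding P_def by auto
    show "conj_map \<beta> z 0 = 0" "conj_map \<beta> z 1 = 1"
      using conj_map_ipoly[OF assms(3), of 0] conj_map_ipoly[OF assms(3), of 1] by simp_all
    show "conj_map \<beta> z (flip_T \<beta> x) = 1 + of_int \<lfloor>\<beta> * x\<rfloor> - z * conj_map \<beta> z x"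
      and "conj_map \<beta> z (ceil_gap \<beta> x) = of_int \<lceil>\<beta> * x\<rceil> - z * conj_map \<beta> z x"
      if "x \<in> P" for x
      using P_ipoly[OF that] conj_map_flip_T[OF assms(3)] conj_map_ceil_gap[OF assms(3)] by blast+
  qed
  show ?thesis by (rule norm_less_or_eq)
qed

theorem corollary2:
  fixes \<beta> :: real
  assumes "Ito_Sadahiro \<beta>" and "\<beta> \<ge> 2"
  shows "Perron \<beta>"
proof -
  have "algebraic_int \<beta>"
    using assms(1) by (intro algebraic_int_if_flip_orbit_periodic Ito_Sadahiro_flip_orbit_periodic)
  moreover have "cmod z < \<beta>" if "alg_conjugate \<beta> z" "z \<noteq> complex_of_real \<beta>" for z
  proof (cases "\<beta> = 2")
    case True
    then show ?thesis using that alg_conjugate_of_int[of 2 z] by simp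
  next
    case False
    then show ?thesis using that assms Ito_Sadahiro_conjugate_bound[of \<beta> z] by simp
  qed
  ultimately show ?thesis unfolding Perron_def using assms(2) by simp
qed

end
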